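(* Let $s\in(1/2,1)$, $0<k<2s$, and let $(J^s)$ satisfy Hypothesis (H1) below. Define, for $\varphi\in C^2(\mathbb{R}^d)$ with suitable growth, $$L^*_\varepsilon\varphi(x)=\frac{1}{\varepsilon^{2s}}\int_{\mathbb{R}^d}J^s_\varepsilon(y)\big[\varphi(x+y)-\varphi(x)\big]\,dy-x\cdot\nabla\varphi(x).$$ Then there exist constants $C_L,\lambda_L>0$ depending only on $k$, $d$ and the family $J$, but not on $\varepsilon\in(0,1]$ or $s$, such that for all $\varepsilon\in(0,1]$ $$L^*_\varepsilon(\langle x\rangle^k)\le C_L-\lambda_L\langle x\rangle^k\quad\text{for all }x\in\mathbb{R}^d.$$
   Context: $\langle x\rangle=(1+|x|^2)^{1/2}$; $J^s_\varepsilon(x)=\varepsilon^{-d}J^s(x/\varepsilon)$; Fourier transform $\hat f(\xi)=\int e^{-ix\cdot\xi}f(x)\,dx$; $L^1_2$ the space of $f$ with $\int(1+|x|^2)|f|<\infty$. Hypothesis (H1): $(J^s)_{s\in(1/2,1)}$ is a family of probability densities on $\mathbb{R}^d$ with $J^s\in L^1\cap L^p$ for some $p\in(1,\infty]$, such that (i) $\int\min\{1,|y|^2\}J^s(y)\,dy<\infty$; (ii) there exist $\delta>0$, $C_0>0$ independent of $s$ with $\hat J^s(\xi)=1-|\xi|^{2s}+R_s(\xi)$, $|R_s(\xi)|\le C_0|\xi|^{2s+\delta}$ for $|\xi|\le1$; (iii) there exist $C,R>0$, $\Psi\in L^1_2$ with $\int x\Psi=0$, independent of $s$, with $J^s(x)\le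 C(1-s)|x|^{-d-2s}+\Psi(x)$ for $|x|\ge R$. *)

theory Defs
  imports "HOL-Analysis.Analysis"
begin

definition jbr :: "'a::euclidean_space \<Rightarrow> real" where
  "jbr x = sqrt (1 + (norm x)\<^sup>2)"

definition fourier :: "('a::euclidean_space \<Rightarrow> real) \<Rightarrow> 'a \<Rightarrow> complex" where
  "fourier f \<xi> = integral\<^sup>L lborel (\<lambda>x. cis (- (x \<bullet> \<xi>)) * complex_of_real (f x))"

definition prob_density :: "('a::euclidean_space \<Rightarrow> real) \<Rightarrow> bool" where
  "prob_density f \<longleftrightarrow> f \<in> borel_measurable lborel \<and> (\<forall>x. 0 \<le> f x)
     \<and> integrable lborel f \<and> integral\<^sup>L lborel f = 1"

definition in_some_Lp :: "('a::euclidean_space \<Rightarrow> real) \<Rightarrow> bool" where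
  "in_some_Lp f \<longleftrightarrow>
     (\<exists>p::real. 1 < p \<and> integrable lborel (\<lambda>x. \<bar>f x\<bar> powr p))
     \<or> (\<exists>M. AE x in lborel. \<bar>f x\<bar> \<le> M)"

definition L1_2 :: "('a::euclidean_space \<Rightarrow> real) \<Rightarrow> bool" where
  "L1_2 f \<longleftrightarrow> f \<in> borel_measurable lborel
     \<and> integrable lborel (\<lambda>x. (1 + (norm x)\<^sup>2) * \<bar>f x\<bar>)"

definition H1 :: "(real \<Rightarrow> 'a::euclidean_space \<Rightarrow> real) \<Rightarrow> bool" where
  "H1 J \<longleftrightarrow>
    (\<forall>s. 1/2 < s \<and> s < 1 \<longrightarrow>
        prob_density (J s) \<and> in_some_Lp (J s)
        \<and> integrable lborel (\<lambda>y. min 1 ((norm y)\<^sup>2) * J s y))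
    \<and> (\<exists>\<delta> C0. 0 < \<delta> \<and> 0 < C0 \<and>
        (\<forall>s \<xi>. 1/2 < s \<and> s < 1 \<and> norm \<xi> \<le> 1 \<longrightarrow>
           cmod (fourier (J s) \<xi> - (1 - complex_of_real ((norm \<xi>) powr (2 * s))))
             \<le> C0 * (norm \<xi>) powr (2 * s + \<delta>)))
    \<and> (\<exists>C R \<Psi>. 0 < C \<and> 0 < R \<and> L1_2 \<Psi>
        \<and> integral\<^sup>L lborel (\<lambda>x. \<Psi> x *\<^sub>R x) = 0
        \<and> (\<forall>s x. 1/2 < s \<and> s < 1 \<and> R \<le> norm x \<longrightarrow>
             J s x \<le> C * (1 - s) * (norm x) powr (- real DIM('a) - 2 * s) + \<Psi> x))"

definition Jeps :: "(real \<Rightarrow> 'a::euclidean_space \<Rightarrow> real) \<Rightarrow> real \<Rightarrow> real \<Rightarrow> 'a \<Rightarrow> real" where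
  "Jeps J s \<epsilon> x = \<epsilon> powr (- real DIM('a)) * J s (x /\<^sub>R \<epsilon>)"

definition Lstar :: "(real \<Rightarrow> 'a::euclidean_space \<Rightarrow> real) \<Rightarrow> real \<Rightarrow> real
     \<Rightarrow> ('a \<Rightarrow> real) \<Rightarrow> 'a \<Rightarrow> real" where
  "Lstar J s \<epsilon> \<phi> x =
     \<epsilon> powr (- 2 * s) * integral\<^sup>L lborel (\<lambda>y. Jeps J s \<epsilon> y * (\<phi> (x + y) - \<phi> x))
     - frechet_derivative \<phi> (at x) x"

end

theory Submission
  imports Defs
begin

text \<open>Write \<open>X = \<langle>x\<rangle>\<close> and \<open>\<phi> = \<langle>\<cdot>\<rangle>\<^sup>k\<close>. The drift gives
  \<open>x \<cdot> \<nabla>\<phi>(x) = k X\<^sup>k - k X\<^sup>k\<^sup>-\<^sup>2 \<ge> k X\<^sup>k - k\<close>, so it suffices to bound the nonlocal term by a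
  constant. After rescaling \<open>y = \<epsilon> z\<close>, the kernel has mean zero (the imaginary part of its Fourier
  transform is \<open>o(|\<xi>|)\<close> because \<open>2s > 1\<close>), so the increment of \<open>\<phi>\<close> may be replaced by its
  Taylor remainder \<open>r(w)\<close>. Concavity of \<open>t \<mapsto> t\<^sup>k\<^sup>/\<^sup>2\<close> gives \<open>r(w) \<le> k/2 X\<^sup>k\<^sup>-\<^sup>2 |w|\<^sup>2\<close>, and for
  \<open>|w| \<ge> X/2\<close> also \<open>r(w) \<le> 5\<^sup>k |w|\<^sup>k + k X\<^sup>k\<^sup>-\<^sup>1 |w|\<close>. The part of the kernel inside \<open>|z| < R\<close> and the
  part dominated by \<open>\<Psi>\<close> are controlled by the second-order bound. On the stable part
  \<open>(1 - s) |z|\<^sup>-\<^sup>d\<^sup>-\<^sup>2\<^sup>s\<close> the scaling in \<open>\<epsilon>\<close> cancels exactly, and the radial integrals over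
  \<open>|w| < X/2\<close> and \<open>|w| \<ge> X/2\<close> produce powers of \<open>X\<close> which combine to \<open>X\<^sup>k\<^sup>-\<^sup>2\<^sup>s \<le> 1\<close>. The factor
  \<open>1 - s\<close> compensates the blow-up of the inner integral as \<open>s \<rightarrow> 1\<close>, and \<open>s \<ge> s\<^sub>1 > max (k/2) (1/2)\<close>
  keeps the outer ones uniformly bounded. Radial integrals are bounded by summing over dyadic
  annuli, each contained in a cube.\<close>

section \<open>Rescaling Lebesgue integrals\<close>

lemma nn_integral_lborel_scaleR:
  fixes f :: "'a::euclidean_space \<Rightarrow> ennreal"
  assumes [measurable]: "f \<in> borel_measurable borel" and c: "c \<noteq> 0"
  shows "(\<integral>\<^sup>+x. f x \<partial>lborel) = ennreal (\<bar>c\<bar> ^ DIM('a)) * (\<integral>\<^sup>+x. f (c *\<^sub>R x) \<partial>lborel)"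
  by (subst lborel_affine[OF c, where t=0 and 'a='a])
     (simp add: nn_integral_density nn_integral_distr nn_integral_cmult)

lemma integrable_lborel_scaleR_iff:
  fixes f :: "'a::euclidean_space \<Rightarrow> real"
  assumes c: "c \<noteq> 0"
  shows "integrable lborel (\<lambda>x. f (c *\<^sub>R x)) \<longleftrightarrow> integrable lborel f"
proof -
  have scaled: "integrable lborel (\<lambda>x. g (a *\<^sub>R x))"
    if g: "integrable lborel g" and a: "a \<noteq> 0" for g :: "'a \<Rightarrow> real" and a
  proof -
    have [measurable]: "g \<in> borel_measurable borel" using g by auto
    have "(\<integral>\<^sup>+x. ennreal (norm (g x)) \<partial>lborel) < \<infinity>"
      using g unfolding integrable_iff_bounded by auto
    then have "(\<integral>\<^sup>+x. ennreal (norm (g (a *\<^sub>R x))) \<partial>lborel) < \<infinity>"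
      using a by (subst (asm) nn_integral_lborel_scaleR[OF _ a]) (auto simp: ennreal_mult_less_top)
    then show ?thesis unfolding integrable_iff_bounded by auto
  qed
  show ?thesis
    using scaled[of f c] scaled[of "\<lambda>x. f (c *\<^sub>R x)" "1/c"] c by auto
qed

lemma lborel_integral_scaleR:
  fixes f :: "'a::euclidean_space \<Rightarrow> real"
  assumes c: "c \<noteq> 0"
  shows "(\<integral>x. f x \<partial>lborel) = \<bar>c\<bar> ^ DIM('a) * (\<integral>x. f (c *\<^sub>R x) \<partial>lborel)"
proof cases
  assume f[measurable]: "integrable lborel f"
  then show ?thesis
    using c integrable_lborel_scaleR_iff[OF c, of f]
    by (subst lborel_affine[OF c, where t=0 and 'a='a]) (simp add: integral_density integral_distr)
next
  assume "\<not> integrable lborel f"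
  with c show ?thesis
    by (simp add: integrable_lborel_scaleR_iff not_integrable_integral_eq)
qed

lemma integral_homogeneous_weight_scaleR:
  fixes f :: "'a::euclidean_space \<Rightarrow> real" and \<beta> :: real
  assumes \<epsilon>: "0 < \<epsilon>"
  defines "w \<equiv> \<lambda>z::'a. norm z powr (- real DIM('a) - \<beta>)"
  shows "integrable lborel (\<lambda>z. w z * f (\<epsilon> *\<^sub>R z)) \<longleftrightarrow> integrable lborel (\<lambda>z. w z * f z)"
    and "(\<integral>z. \<epsilon> powr (- \<beta>) * (w z * f (\<epsilon> *\<^sub>R z)) \<partial>lborel) = (\<integral>z. w z * f z \<partial>lborel)"
proof -
  have w_scaled: "w (\<epsilon> *\<^sub>R z) * f (\<epsilon> *\<^sub>R z) = \<epsilon> powr (- real DIM('a) - \<beta>) * (w z * f (\<epsilon> *\<^sub>R z))" for z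
    using \<epsilon> by (simp add: w_def powr_mult)
  show "integrable lborel (\<lambda>z. w z * f (\<epsilon> *\<^sub>R z)) \<longleftrightarrow> integrable lborel (\<lambda>z. w z * f z)"
    using integrable_lborel_scaleR_iff[of \<epsilon> "\<lambda>z. w z * f z"] \<epsilon>
    by (simp add: w_scaled)
  have "(\<integral>z. w z * f z \<partial>lborel)
      = (\<epsilon> ^ DIM('a) * \<epsilon> powr (- real DIM('a) - \<beta>)) * (\<integral>z. w z * f (\<epsilon> *\<^sub>R z) \<partial>lborel)"
    using \<epsilon> by (subst lborel_integral_scaleR[of \<epsilon>]) (auto simp: w_scaled)
  also have "\<epsilon> ^ DIM('a) * \<epsilon> powr (- real DIM('a) - \<beta>) = \<epsilon> powr (- \<beta>)"
    using \<epsilon> by (simp add: powr_diff powr_minus powr_realpow field_simps)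
  finally show "(\<integral>z. \<epsilon> powr (- \<beta>) * (w z * f (\<epsilon> *\<^sub>R z)) \<partial>lborel) = (\<integral>z. w z * f z \<partial>lborel)"
    by simp
qed

section \<open>Integrals of radial powers\<close>

lemma ex_power_of_two_bracket:
  fixes y :: real
  assumes "1 \<le> y"
  shows "\<exists>j::nat. 2 ^ j \<le> y \<and> y < 2 ^ Suc j"
proof -
  define j where "j = nat \<lfloor>log 2 y\<rfloor>"
  have "0 \<le> \<lfloor>log 2 y\<rfloor>" using assms by simp
  then have "2 powr real j \<le> y \<and> y < 2 powr (real j + 1)"
    using floor_log_eq_powr_iff[of y 2 "\<lfloor>log 2 y\<rfloor>"] assms by (simp add: j_def)
  then show ?thesis by (auto simp: powr_realpow powr_add)
qed

lemma powr_le_dyadic_interval: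
  fixes \<rho> t q :: real
  assumes "0 < \<rho>" "\<rho> \<le> t" "t \<le> 2 * \<rho>"
  shows "t powr q \<le> 2 powr \<bar>q\<bar> * \<rho> powr q"
proof (cases "0 \<le> q")
  case True
  then have "t powr q \<le> (2 * \<rho>) powr q" using assms by (intro powr_mono2) auto
  then show ?thesis using True assms by (simp add: powr_mult)
next
  case False
  then have "t powr q \<le> \<rho> powr q" using assms by (intro powr_mono2') auto
  also have "\<dots> \<le> 2 powr \<bar>q\<bar> * \<rho> powr q"
    using ge_one_powr_ge_zero[of 2 "\<bar>q\<bar>"] by (simp add: mult_le_cancel_right1)
  finally show ?thesis .
qed

lemma nn_integral_annulus_norm_powr_le:
  fixes \<rho> q :: real
  assumes \<rho>: "0 < \<rho>"
  shows "(\<integral>\<^sup>+z. indicator {z::'a::euclidean_space. \<rho> \<le> norm z \<and> norm z \<le> 2 * \<rho>} z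
             * ennreal (norm z powr q) \<partial>lborel)
     \<le> ennreal (2 powr \<bar>q\<bar> * 4 ^ DIM('a) * \<rho> powr (q + DIM('a)))"
proof -
  let ?C = "cbox (- ((2 * \<rho>) *\<^sub>R One)) ((2 * \<rho>) *\<^sub>R One) :: 'a set"
  have "(\<integral>\<^sup>+z. indicator {z::'a. \<rho> \<le> norm z \<and> norm z \<le> 2 * \<rho>} z * ennreal (norm z powr q) \<partial>lborel)
     \<le> (\<integral>\<^sup>+z. ennreal (2 powr \<bar>q\<bar> * \<rho> powr q) * indicator ?C z \<partial>lborel)"
  proof (intro nn_integral_mono)
    fix z :: 'a
    show "indicator {z. \<rho> \<le> norm z \<and> norm z \<le> 2 * \<rho>} z * ennreal (norm z powr q)
        \<le> ennreal (2 powr \<bar>q\<bar> * \<rho> powr q) * indicator ?C z"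
    proof (cases "\<rho> \<le> norm z \<and> norm z \<le> 2 * \<rho>")
      case True
      then have "z \<in> ?C"
        using Basis_le_norm[of _ z] by (force simp: mem_box abs_le_iff intro: order_trans)
      with True powr_le_dyadic_interval[OF \<rho>, of "norm z" q] show ?thesis
        by (auto simp: indicator_def intro!: ennreal_leI)
    qed (auto simp: indicator_def)
  qed
  also have "\<dots> = ennreal (2 powr \<bar>q\<bar> * \<rho> powr q) * emeasure lborel ?C"
    by (rule nn_integral_cmult_indicator) auto
  also have "emeasure lborel ?C = ennreal ((4 * \<rho>) ^ DIM('a))"
    using \<rho> by (simp add: emeasure_lborel_cbox_eq inner_simps prod_constant)
  finally show ?thesis
    using \<rho> by (simp add: ennreal_mult'[symmetric] powr_add powr_realpow power_mult_distrib mult_ac)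
qed

lemma integral_norm_powr_dyadic_le:
  fixes S :: "'a::euclidean_space set" and \<rho> :: "nat \<Rightarrow> real" and q c \<theta> :: real
  assumes [measurable]: "S \<in> sets borel"
    and \<rho>: "\<And>j. 0 < \<rho> j" and geometric: "\<And>j. \<rho> j powr (q + DIM('a)) = c * \<theta> ^ j"
    and \<theta>: "0 \<le> \<theta>" "\<theta> < 1"
    and cover: "\<And>z. z \<in> S \<Longrightarrow> z \<noteq> 0 \<Longrightarrow> \<exists>j. \<rho> j \<le> norm z \<and> norm z \<le> 2 * \<rho> j"
  shows "integrable lborel (\<lambda>z. indicator S z * norm z powr q)"
    and "(\<integral>z. indicator S z * norm z powr q \<partial>lborel) \<le> 2 powr \<bar>q\<bar> * 4 ^ DIM('a) * c / (1 - \<theta>)"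
proof -
  define A where "A j = {z::'a. \<rho> j \<le> norm z \<and> norm z \<le> 2 * \<rho> j}" for j
  define f where "f z = indicator S z * norm z powr q" for z :: 'a
  define B where "B = 2 powr \<bar>q\<bar> * 4 ^ DIM('a) * c / (1 - \<theta>)"
  have c: "0 < c"
    using geometric[of 0] powr_gt_zero[of "\<rho> 0" "q + DIM('a)"] \<rho>[of 0] by simp
  have f_nonneg: "0 \<le> f z" for z by (simp add: f_def)
  have f_measurable[measurable]: "f \<in> borel_measurable borel" unfolding f_def by measurable
  have "(\<integral>\<^sup>+z. ennreal (f z) \<partial>lborel) \<le> (\<integral>\<^sup>+z. (\<Sum>j. indicator (A j) z * ennreal (norm z powr q)) \<partial>lborel)"
  proof (intro nn_integral_mono)
    fix z
    show "ennreal (f z) \<le> (\<Sum>j. indicator (A j) z * ennreal (norm z powr q))"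
    proof (cases "z \<in> S \<and> z \<noteq> 0")
      case True
      then obtain j where "z \<in> A j" using cover by (auto simp: A_def)
      then have "ennreal (f z) = (\<Sum>i\<in>{j}. indicator (A i) z * ennreal (norm z powr q))"
        using True by (simp add: f_def)
      also have "\<dots> \<le> (\<Sum>j. indicator (A j) z * ennreal (norm z powr q))"
        by (intro sum_le_suminf) auto
      finally show ?thesis .
    qed (auto simp: f_def indicator_def)
  qed
  also have "\<dots> = (\<Sum>j. \<integral>\<^sup>+z. indicator (A j) z * ennreal (norm z powr q) \<partial>lborel)"
    by (intro nn_integral_suminf) (auto simp: A_def)
  also have "\<dots> \<le> (\<Sum>j. ennreal (2 powr \<bar>q\<bar> * 4 ^ DIM('a) * c * \<theta> ^ j))"
  proof (intro suminf_le allI)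
    show "(\<integral>\<^sup>+z. indicator (A j) z * ennreal (norm z powr q) \<partial>lborel)
        \<le> ennreal (2 powr \<bar>q\<bar> * 4 ^ DIM('a) * c * \<theta> ^ j)" for j
      using nn_integral_annulus_norm_powr_le[OF \<rho>, of j q, where 'a='a]
      by (simp add: A_def geometric mult.assoc)
  qed auto
  also have "\<dots> = ennreal B"
    using \<theta> c by (subst suminf_ennreal2)
      (auto simp: B_def suminf_mult summable_geometric suminf_geometric intro!: summable_mult)
  finally have bound: "(\<integral>\<^sup>+z. ennreal (f z) \<partial>lborel) \<le> ennreal B" .
  then show "integrable lborel (\<lambda>z. indicator S z * norm z powr q)"
    unfolding f_def[symmetric] using f_nonneg
    by (intro integrableI_nonneg) (auto intro: le_less_trans)
  have "0 \<le> B" using \<theta> c by (simp add: B_def)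
  from integral_real_bounded[OF this bound]
  show "(\<integral>z. indicator S z * norm z powr q \<partial>lborel) \<le> 2 powr \<bar>q\<bar> * 4 ^ DIM('a) * c / (1 - \<theta>)"
    by (simp add: f_def[abs_def] B_def)
qed

lemma integral_norm_powr_outside_ball:
  fixes \<rho> \<gamma> :: real
  assumes \<rho>: "0 < \<rho>" and \<gamma>: "0 < \<gamma>"
  shows "integrable lborel
      (\<lambda>z::'a::euclidean_space. indicator {z. \<rho> \<le> norm z} z * norm z powr (- real DIM('a) - \<gamma>))"
    and "(\<integral>z. indicator {z::'a. \<rho> \<le> norm z} z * norm z powr (- real DIM('a) - \<gamma>) \<partial>lborel)
      \<le> 2 powr (DIM('a) + \<gamma>) * 4 ^ DIM('a) * \<rho> powr (- \<gamma>) / (1 - 2 powr (- \<gamma>))"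
proof -
  have geometric: "(\<rho> * 2 ^ j) powr (- real DIM('a) - \<gamma> + DIM('a)) = \<rho> powr (- \<gamma>) * (2 powr (- \<gamma>)) ^ j" for j
    using \<rho> by (simp add: powr_mult powr_realpow[symmetric] powr_powr mult.commute)
  have cover: "\<exists>j. \<rho> * 2 ^ j \<le> norm z \<and> norm z \<le> 2 * (\<rho> * 2 ^ j)" if "z \<in> {z. \<rho> \<le> norm z}" for z :: 'a
  proof -
    have "1 \<le> norm z / \<rho>" using that \<rho> by simp
    then obtain j :: nat where "2 ^ j \<le> norm z / \<rho>" "norm z / \<rho> < 2 ^ Suc j"
      using ex_power_of_two_bracket by blast
    then show ?thesis using \<rho> by (intro exI[of _ j]) (simp add: field_simps)
  qed
  have "2 powr (- \<gamma>) < 1" using \<gamma> by (simp add: powr_less_one)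
  note dyadic = integral_norm_powr_dyadic_le[where S="{z. \<rho> \<le> norm z}" and \<rho>="\<lambda>j. \<rho> * 2 ^ j",
      OF _ _ geometric _ this cover]
  have "\<bar>- real DIM('a) - \<gamma>\<bar> = DIM('a) + \<gamma>" using \<gamma> by simp
  with dyadic \<rho> show "integrable lborel
      (\<lambda>z::'a. indicator {z. \<rho> \<le> norm z} z * norm z powr (- real DIM('a) - \<gamma>))"
    and "(\<integral>z. indicator {z::'a. \<rho> \<le> norm z} z * norm z powr (- real DIM('a) - \<gamma>) \<partial>lborel)
      \<le> 2 powr (DIM('a) + \<gamma>) * 4 ^ DIM('a) * \<rho> powr (- \<gamma>) / (1 - 2 powr (- \<gamma>))"
    by simp_all
qed

lemma integral_norm_powr_inside_ball:
  fixes \<rho> a :: real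
  assumes \<rho>: "0 < \<rho>" and a: "0 < a"
  shows "integrable lborel
      (\<lambda>z::'a::euclidean_space. indicator {z. norm z < \<rho>} z * norm z powr (a - real DIM('a)))"
    and "(\<integral>z. indicator {z::'a. norm z < \<rho>} z * norm z powr (a - real DIM('a)) \<partial>lborel)
      \<le> 2 powr \<bar>a - DIM('a)\<bar> * 4 ^ DIM('a) * \<rho> powr a / (2 powr a - 1)"
proof -
  have geometric: "(\<rho> / 2 ^ Suc j) powr (a - real DIM('a) + DIM('a))
      = (\<rho> powr a * 2 powr (- a)) * (2 powr (- a)) ^ j" for j
  proof -
    have "(2 ^ Suc j) powr a = 2 powr a * (2 powr a) ^ j"
      by (simp add: powr_realpow[symmetric] powr_powr powr_mult mult.commute)
    then show ?thesis
      using \<rho> by (simp add: powr_divide powr_minus power_inverse field_simps)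
  qed
  have cover: "\<exists>j. \<rho> / 2 ^ Suc j \<le> norm z \<and> norm z \<le> 2 * (\<rho> / 2 ^ Suc j)"
    if "z \<in> {z. norm z < \<rho>}" "z \<noteq> 0" for z :: 'a
  proof -
    have "1 \<le> \<rho> / norm z" using that by simp
    then obtain j :: nat where "2 ^ j \<le> \<rho> / norm z" "\<rho> / norm z < 2 ^ Suc j"
      using ex_power_of_two_bracket by blast
    then show ?thesis using that by (intro exI[of _ j]) (simp add: field_simps)
  qed
  have "2 powr (- a) < 1" using a by (simp add: powr_less_one)
  note dyadic = integral_norm_powr_dyadic_le[where S="{z. norm z < \<rho>}" and \<rho>="\<lambda>j. \<rho> / 2 ^ Suc j",
      OF _ _ geometric _ this cover]
  have "2 powr \<bar>a - DIM('a)\<bar> * 4 ^ DIM('a) * (\<rho> powr a * 2 powr (- a)) / (1 - 2 powr (- a))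
      = 2 powr \<bar>a - DIM('a)\<bar> * 4 ^ DIM('a) * \<rho> powr a / (2 powr a - 1)"
    using a by (simp add: powr_minus field_simps)
  with dyadic \<rho> show "integrable lborel
      (\<lambda>z::'a. indicator {z. norm z < \<rho>} z * norm z powr (a - real DIM('a)))"
    and "(\<integral>z. indicator {z::'a. norm z < \<rho>} z * norm z powr (a - real DIM('a)) \<partial>lborel)
      \<le> 2 powr \<bar>a - DIM('a)\<bar> * 4 ^ DIM('a) * \<rho> powr a / (2 powr a - 1)"
    by simp_all
qed

lemma integral_norm_powr_outside_ball_uniform:
  fixes \<rho> \<gamma> \<gamma>\<^sub>0 :: real
  assumes \<rho>: "0 < \<rho>" and \<gamma>: "0 < \<gamma>\<^sub>0" "\<gamma>\<^sub>0 \<le> \<gamma>" "\<gamma> \<le> 2"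
  shows "(\<integral>z. indicator {z::'a::euclidean_space. \<rho> \<le> norm z} z * norm z powr (- real DIM('a) - \<gamma>) \<partial>lborel)
      \<le> 2 powr (DIM('a) + 2) * 4 ^ DIM('a) / (1 - 2 powr (- \<gamma>\<^sub>0)) * \<rho> powr (- \<gamma>)"
proof -
  have "2 powr (- \<gamma>) \<le> 2 powr (- \<gamma>\<^sub>0)" "2 powr (- \<gamma>\<^sub>0) < 1" "2 powr (- \<gamma>) < 1"
    using \<gamma> by (auto simp: powr_less_one)
  then have "1 / (1 - 2 powr (- \<gamma>)) \<le> 1 / (1 - 2 powr (- \<gamma>\<^sub>0))"
    by (intro divide_left_mono) auto
  moreover have "2 powr (DIM('a) + \<gamma>) \<le> 2 powr (DIM('a) + 2)"
    using \<gamma> by simp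
  ultimately have "2 powr (DIM('a) + \<gamma>) * 4 ^ DIM('a) * \<rho> powr (- \<gamma>) * (1 / (1 - 2 powr (- \<gamma>)))
      \<le> 2 powr (DIM('a) + 2) * 4 ^ DIM('a) * \<rho> powr (- \<gamma>) * (1 / (1 - 2 powr (- \<gamma>\<^sub>0)))"
    using \<gamma> \<open>2 powr (- \<gamma>) < 1\<close> by (intro mult_mono) auto
  then show ?thesis
    using integral_norm_powr_outside_ball(2)[OF \<rho>, of \<gamma>, where 'a='a] \<gamma> by simp
qed

lemma integral_norm_powr_inside_ball_uniform:
  fixes \<rho> a :: real
  assumes \<rho>: "0 < \<rho>" and a: "0 < a" "a \<le> 1"
  shows "a * (\<integral>z. indicator {z::'a::euclidean_space. norm z < \<rho>} z * norm z powr (a - real DIM('a)) \<partial>lborel)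
      \<le> 2 powr (DIM('a) + 1) * 4 ^ DIM('a) * \<rho> powr a"
proof -
  have "1 + a * ln 2 \<le> 2 powr a"
    using exp_ge_add_one_self[of "a * ln 2"] by (simp add: powr_def mult.commute)
  moreover have "a * 1 \<le> a * (2 * ln 2)"
    using ln2_ge_two_thirds a by (intro mult_left_mono) auto
  ultimately have "a \<le> 2 * (2 powr a - 1)"
    by (simp add: algebra_simps)
  then have "a / (2 powr a - 1) \<le> 2"
    using a by (simp add: divide_le_eq)
  moreover have "2 powr \<bar>a - DIM('a)\<bar> \<le> 2 powr DIM('a)"
  proof -
    have "1 \<le> real DIM('a)" by (simp add: DIM_positive Suc_le_eq)
    then have "\<bar>a - real DIM('a)\<bar> \<le> real DIM('a)" using a unfolding abs_le_iff by linarith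
    then show ?thesis by simp
  qed
  ultimately have "a / (2 powr a - 1) * (2 powr \<bar>a - DIM('a)\<bar> * (4 ^ DIM('a) * \<rho> powr a))
      \<le> 2 * (2 powr DIM('a) * (4 ^ DIM('a) * \<rho> powr a))"
    using a by (intro mult_mono) auto
  then have bound: "a * (2 powr \<bar>a - DIM('a)\<bar> * 4 ^ DIM('a) * \<rho> powr a / (2 powr a - 1))
      \<le> 2 powr (DIM('a) + 1) * 4 ^ DIM('a) * \<rho> powr a"
    by (simp add: powr_add field_simps)
  have "a * (\<integral>z. indicator {z::'a. norm z < \<rho>} z * norm z powr (a - real DIM('a)) \<partial>lborel)
      \<le> a * (2 powr \<bar>a - DIM('a)\<bar> * 4 ^ DIM('a) * \<rho> powr a / (2 powr a - 1))"
    using integral_norm_powr_inside_ball(2)[OF \<rho> a(1), where 'a='a] a by (intro mult_left_mono) auto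
  with bound show ?thesis by linarith
qed

lemma powr_mult_half_powr_le:
  fixes X c e :: real
  assumes "1 \<le> X" "c + e \<le> 0"
  shows "X powr c * (X / 2) powr e \<le> 2 powr (- e)"
proof -
  have "(X / 2) powr e = X powr e * 2 powr (- e)"
    using assms by (simp add: powr_divide powr_minus_divide)
  then have "X powr c * (X / 2) powr e = X powr (c + e) * 2 powr (- e)"
    unfolding powr_add by (simp only: mult.assoc)
  also have "\<dots> \<le> 1 * 2 powr (- e)"
  proof (rule mult_right_mono)
    show "X powr (c + e) \<le> 1"
      using assms powr_mono[of "c + e" 0 X] by simp
  qed simp
  finally show ?thesis by simp
qed

lemma integral_norm_powr_outside_half_le:
  fixes X c \<gamma> \<gamma>\<^sub>0 :: real
  assumes X: "1 \<le> X" and \<gamma>: "0 < \<gamma>\<^sub>0" "\<gamma>\<^sub>0 \<le> \<gamma>" "\<gamma> \<le> 2" and c: "c \<le> \<gamma>"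
  shows "X powr c * (\<integral>w. indicator {w::'a::euclidean_space. X / 2 \<le> norm w} w
        * norm w powr (- real DIM('a) - \<gamma>) \<partial>lborel)
      \<le> 2 powr (DIM('a) + 2) * 4 ^ DIM('a) / (1 - 2 powr (- \<gamma>\<^sub>0)) * 2 powr \<gamma>"
proof -
  define K where "K = 2 powr (DIM('a) + 2) * 4 ^ DIM('a) / (1 - 2 powr (- \<gamma>\<^sub>0))"
  have "0 \<le> K" using \<gamma> by (simp add: K_def powr_less_one less_imp_le)
  have "X powr c * (\<integral>w. indicator {w::'a. X / 2 \<le> norm w} w * norm w powr (- real DIM('a) - \<gamma>) \<partial>lborel)
      \<le> X powr c * (K * (X / 2) powr (- \<gamma>))"
    using integral_norm_powr_outside_ball_uniform[of "X / 2" \<gamma>\<^sub>0 \<gamma>, where 'a='a] X \<gamma>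
    by (intro mult_left_mono) (simp_all add: K_def)
  also have "\<dots> = K * (X powr c * (X / 2) powr (- \<gamma>))" by simp
  also have "\<dots> \<le> K * 2 powr \<gamma>"
    using powr_mult_half_powr_le[OF X, of c "- \<gamma>"] c \<open>0 \<le> K\<close> by (intro mult_left_mono) auto
  finally show ?thesis by (simp add: K_def)
qed

lemma integral_norm_powr_inside_half_le:
  fixes X c a :: real
  assumes X: "1 \<le> X" and a: "0 < a" "a \<le> 1" and c: "c + a \<le> 0"
  shows "a * (X powr c * (\<integral>w. indicator {w::'a::euclidean_space. norm w < X / 2} w
        * norm w powr (a - real DIM('a)) \<partial>lborel))
      \<le> 2 powr (DIM('a) + 1) * 4 ^ DIM('a)"
proof -
  define K where "K = 2 powr (DIM('a) + 1) * 4 ^ DIM('a)"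
  have "a * (X powr c * (\<integral>w. indicator {w::'a. norm w < X / 2} w * norm w powr (a - real DIM('a)) \<partial>lborel))
      = X powr c * (a * (\<integral>w. indicator {w::'a. norm w < X / 2} w * norm w powr (a - real DIM('a)) \<partial>lborel))"
    by simp
  also have "\<dots> \<le> X powr c * (K * (X / 2) powr a)"
    using integral_norm_powr_inside_ball_uniform[of "X / 2" a, where 'a='a] X a
    by (intro mult_left_mono) (simp_all add: K_def)
  also have "\<dots> = K * (X powr c * (X / 2) powr a)" by simp
  also have "\<dots> \<le> K * 1"
    using powr_mult_half_powr_le[OF X c] a powr_mono[of "- a" 0 2]
    by (intro mult_left_mono) (auto simp: K_def)
  finally show ?thesis by (simp add: K_def)
qed

section \<open>The weight \<open>\<langle>x\<rangle>\<^sup>k\<close> and its Taylor remainder\<close>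

lemma jbr_ge_1: "1 \<le> jbr x"
  by (simp add: jbr_def)

lemma norm_le_jbr: "norm x \<le> jbr x"
  unfolding jbr_def by (rule real_le_rsqrt) simp

lemma jbr_le_1_plus_norm: "jbr x \<le> 1 + norm x"
  unfolding jbr_def by (rule real_le_lsqrt) (auto simp: power2_eq_square algebra_simps)

lemma jbr_powr_eq: "jbr x powr k = (1 + (norm x)\<^sup>2) powr (k / 2)"
  unfolding jbr_def by (simp add: powr_half_sqrt[symmetric] powr_powr add_nonneg_nonneg)

lemma has_derivative_jbr_powr:
  fixes x :: "'a::euclidean_space"
  shows "((\<lambda>z. jbr z powr k) has_derivative (\<lambda>h. k * jbr x powr (k - 2) * (x \<bullet> h))) (at x)"
proof -
  have pos: "0 < 1 + x \<bullet> x" by (simp add: add_pos_nonneg)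
  have "((\<lambda>z::'a. (1 + z \<bullet> z) powr (k / 2)) has_derivative
      (\<lambda>h. k / 2 * (1 + x \<bullet> x) powr (k / 2 - 1) * (h \<bullet> x + x \<bullet> h))) (at x)"
    using pos powr_add[of "1 + x \<bullet> x" "k / 2 - 1" 1]
    by (auto intro!: derivative_eq_intros ext simp: field_simps)
  moreover have "jbr x powr (k - 2) = (1 + x \<bullet> x) powr (k / 2 - 1)"
    by (simp add: jbr_powr_eq diff_divide_distrib power2_norm_eq_inner)
  ultimately show ?thesis
    by (simp add: jbr_powr_eq power2_norm_eq_inner inner_commute algebra_simps)
qed

lemma frechet_derivative_jbr_powr_self:
  "frechet_derivative (\<lambda>z. jbr z powr k) (at x) x = k * jbr x powr k - k * jbr x powr (k - 2)"
proof -
  have "jbr x powr (k - 2) * (x \<bullet> x) = jbr x powr (k - 2) * (jbr x powr 2 - 1)"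
    by (simp add: jbr_def power2_norm_eq_inner)
  also have "\<dots> = jbr x powr k - jbr x powr (k - 2)"
    by (simp add: algebra_simps powr_add[symmetric])
  moreover have "frechet_derivative (\<lambda>z. jbr z powr k) (at x) x = k * (jbr x powr (k - 2) * (x \<bullet> x))"
    using frechet_derivative_at[OF has_derivative_jbr_powr[of k x], symmetric] by simp
  ultimately show ?thesis by (simp add: right_diff_distrib)
qed

lemma powr_le_tangent_line:
  fixes a b p :: real
  assumes "0 < a" "0 < b" "0 \<le> p" "p \<le> 1"
  shows "b powr p \<le> a powr p + p * a powr (p - 1) * (b - a)"
proof -
  define t where "t = b / a"
  have "t powr p * 1 powr (1 - p) \<le> p * t + (1 - p) * 1"
    using assms by (intro Youngs_inequality_0) (auto simp: t_def)
  then have "a powr p * t powr p \<le> a powr p * (p * t + (1 - p))"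
    by (intro mult_left_mono) auto
  moreover have "a powr p * t powr p = b powr p"
    using assms by (simp add: t_def powr_divide)
  moreover have "a powr p * (p * t + (1 - p)) = a powr p + p * (a powr p / a) * (b - a)"
    using assms by (simp add: t_def field_simps)
  ultimately show ?thesis
    using assms by (simp add: powr_diff)
qed

definition jbr_remainder :: "real \<Rightarrow> 'a::euclidean_space \<Rightarrow> 'a \<Rightarrow> real" where
  "jbr_remainder k x w = jbr (x + w) powr k - jbr x powr k - k * jbr x powr (k - 2) * (x \<bullet> w)"

lemma jbr_remainder_le_square:
  assumes "0 \<le> k" "k \<le> 2"
  shows "jbr_remainder k x w \<le> k / 2 * jbr x powr (k - 2) * (norm w)\<^sup>2"
proof -
  have "(1 + (norm (x + w))\<^sup>2) powr (k / 2) \<le> (1 + (norm x)\<^sup>2) powr (k / 2)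
      + k / 2 * (1 + (norm x)\<^sup>2) powr (k / 2 - 1) * ((1 + (norm (x + w))\<^sup>2) - (1 + (norm x)\<^sup>2))"
    using assms by (intro powr_le_tangent_line) (auto simp: add_pos_nonneg)
  moreover have "(1 + (norm (x + w))\<^sup>2) - (1 + (norm x)\<^sup>2) = 2 * (x \<bullet> w) + (norm w)\<^sup>2"
    by (simp add: power2_norm_eq_inner inner_simps inner_commute)
  moreover have "(1 + (norm x)\<^sup>2) powr (k / 2 - 1) = jbr x powr (k - 2)"
    by (simp add: jbr_powr_eq diff_divide_distrib)
  ultimately have "jbr (x + w) powr k
      \<le> jbr x powr k + k / 2 * jbr x powr (k - 2) * (2 * (x \<bullet> w) + (norm w)\<^sup>2)"
    by (simp only: jbr_powr_eq[symmetric])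
  moreover have "k / 2 * jbr x powr (k - 2) * (2 * (x \<bullet> w) + (norm w)\<^sup>2)
      = k * jbr x powr (k - 2) * (x \<bullet> w) + k / 2 * jbr x powr (k - 2) * (norm w)\<^sup>2"
    by (simp add: algebra_simps)
  ultimately show ?thesis
    unfolding jbr_remainder_def by linarith
qed

lemma jbr_remainder_le_far:
  assumes k: "0 \<le> k" and far: "jbr x / 2 \<le> norm w"
  shows "jbr_remainder k x w \<le> 5 powr k * norm w powr k + k * jbr x powr (k - 1) * norm w"
proof -
  have "jbr (x + w) \<le> 1 + norm x + norm w"
    using jbr_le_1_plus_norm[of "x + w"] norm_triangle_ineq[of x w] by simp
  also have "\<dots> \<le> 5 * norm w"
    using norm_le_jbr[of x] jbr_ge_1[of x] far by simp
  finally have first: "jbr (x + w) powr k \<le> 5 powr k * norm w powr k"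
    using k jbr_ge_1[of "x + w"] by (simp add: powr_mono2 powr_mult[symmetric])
  have "- (x \<bullet> w) \<le> jbr x * norm w"
    using Cauchy_Schwarz_ineq2[of x w] abs_ge_minus_self[of "x \<bullet> w"]
      mult_right_mono[OF norm_le_jbr[of x] norm_ge_zero[of w]]
    by linarith
  then have "k * jbr x powr (k - 2) * (- (x \<bullet> w)) \<le> k * jbr x powr (k - 2) * (jbr x * norm w)"
    using k by (intro mult_left_mono) auto
  also have "\<dots> = k * jbr x powr (k - 1) * norm w"
    using jbr_ge_1[of x] by (simp add: powr_diff field_simps powr_numeral power2_eq_square)
  finally have "- (k * jbr x powr (k - 2) * (x \<bullet> w)) \<le> k * jbr x powr (k - 1) * norm w"
    by simp
  with first show ?thesis
    unfolding jbr_remainder_def using powr_ge_zero[of "jbr x" k] by linarith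
qed

definition jbr_remainder_majorant :: "real \<Rightarrow> real \<Rightarrow> real \<Rightarrow> real" where
  "jbr_remainder_majorant k X r =
     (if r < X / 2 then k / 2 * X powr (k - 2) * r\<^sup>2 else 5 powr k * r powr k + k * X powr (k - 1) * r)"

lemma jbr_remainder_majorant_nonneg:
  "0 \<le> k \<Longrightarrow> 0 \<le> r \<Longrightarrow> 0 \<le> jbr_remainder_majorant k X r"
  by (simp add: jbr_remainder_majorant_def)

lemma jbr_remainder_le_majorant:
  assumes "0 \<le> k" "k \<le> 2"
  shows "jbr_remainder k x w \<le> jbr_remainder_majorant k (jbr x) (norm w)"
  using jbr_remainder_le_square[OF assms, of x w] jbr_remainder_le_far[OF assms(1), of x w]
  by (simp add: jbr_remainder_majorant_def)

lemma norm_powr_mult_jbr_remainder_majorant_eq: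
  fixes w :: "'a::euclidean_space"
  shows "norm w powr (- real DIM('a) - \<beta>) * jbr_remainder_majorant k X (norm w)
    = k / 2 * X powr (k - 2) * (indicator {w. norm w < X / 2} w * norm w powr ((2 - \<beta>) - DIM('a)))
      + 5 powr k * (indicator {w. X / 2 \<le> norm w} w * norm w powr (- real DIM('a) - (\<beta> - k)))
      + k * X powr (k - 1) * (indicator {w. X / 2 \<le> norm w} w * norm w powr (- real DIM('a) - (\<beta> - 1)))"
proof (cases "w = 0")
  case False
  let ?n = "norm w powr (- real DIM('a) - \<beta>)"
  have shift: "?n * norm w powr e = norm w powr (- real DIM('a) - (\<beta> - e))" for e
    by (simp add: powr_add[symmetric] algebra_simps)
  show ?thesis
  proof (cases "norm w < X / 2")
    case True
    have "?n * jbr_remainder_majorant k X (norm w) = k / 2 * X powr (k - 2) * (?n * norm w powr 2)"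
      using True False by (simp add: jbr_remainder_majorant_def powr_numeral)
    also have "\<dots> = k / 2 * X powr (k - 2) * norm w powr ((2 - \<beta>) - DIM('a))"
      unfolding shift by (simp add: algebra_simps)
    finally show ?thesis
      using True by simp
  next
    case False
    have "?n * jbr_remainder_majorant k X (norm w)
        = 5 powr k * (?n * norm w powr k) + k * X powr (k - 1) * (?n * norm w powr 1)"
      using False \<open>w \<noteq> 0\<close> by (simp add: jbr_remainder_majorant_def algebra_simps)
    also have "\<dots> = 5 powr k * norm w powr (- real DIM('a) - (\<beta> - k))
        + k * X powr (k - 1) * norm w powr (- real DIM('a) - (\<beta> - 1))"
      unfolding shift ..
    finally show ?thesis
      using False by simp
  qed
qed (simp add: jbr_remainder_majorant_def)

lemma integral_norm_powr_mult_jbr_remainder_majorant_eq: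
  assumes X: "0 < X" and \<beta>: "1 < \<beta>" "k < \<beta>" "\<beta> < 2"
  shows "integrable lborel
      (\<lambda>w::'a::euclidean_space. norm w powr (- real DIM('a) - \<beta>) * jbr_remainder_majorant k X (norm w))"
    and "(\<integral>w. norm (w::'a) powr (- real DIM('a) - \<beta>) * jbr_remainder_majorant k X (norm w) \<partial>lborel)
      = k / 2 * X powr (k - 2)
          * (\<integral>w. indicator {w::'a. norm w < X / 2} w * norm w powr ((2 - \<beta>) - DIM('a)) \<partial>lborel)
        + 5 powr k
          * (\<integral>w. indicator {w::'a. X / 2 \<le> norm w} w * norm w powr (- real DIM('a) - (\<beta> - k)) \<partial>lborel)
        + k * X powr (k - 1)
          * (\<integral>w. indicator {w::'a. X / 2 \<le> norm w} w * norm w powr (- real DIM('a) - (\<beta> - 1)) \<partial>lborel)"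
  unfolding norm_powr_mult_jbr_remainder_majorant_eq
  using X \<beta> integral_norm_powr_inside_ball(1)[of "X / 2" "2 - \<beta>", where 'a='a]
    integral_norm_powr_outside_ball(1)[of "X / 2" "\<beta> - k", where 'a='a]
    integral_norm_powr_outside_ball(1)[of "X / 2" "\<beta> - 1", where 'a='a]
  by simp_all

lemma integral_norm_powr_mult_jbr_remainder_majorant_le:
  fixes s s\<^sub>1 k X :: real
  assumes s: "1/2 < s\<^sub>1" "s\<^sub>1 \<le> s" "s < 1" and k: "0 < k" "k < 2 * s\<^sub>1" and X: "1 \<le> X"
  shows "(1 - s) * (\<integral>w. norm (w::'a::euclidean_space) powr (- real DIM('a) - 2 * s)
        * jbr_remainder_majorant k X (norm w) \<partial>lborel)
    \<le> k / 2 * (2 powr DIM('a) * 4 ^ DIM('a))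
      + (4 * 5 powr k + 4 * k)
        * (2 powr (DIM('a) + 2) * 4 ^ DIM('a) / (1 - 2 powr (- min (2 * s\<^sub>1 - k) (2 * s\<^sub>1 - 1))))"
proof -
  define \<gamma>\<^sub>0 where "\<gamma>\<^sub>0 = min (2 * s\<^sub>1 - k) (2 * s\<^sub>1 - 1)"
  define C where "C = 2 powr (DIM('a) + 2) * 4 ^ DIM('a) / (1 - 2 powr (- \<gamma>\<^sub>0))"
  define I\<^sub>i\<^sub>n where
    "I\<^sub>i\<^sub>n = (\<integral>w. indicator {w::'a. norm w < X / 2} w * norm w powr ((2 - 2 * s) - DIM('a)) \<partial>lborel)"
  define I\<^sub>k where
    "I\<^sub>k = (\<integral>w. indicator {w::'a. X / 2 \<le> norm w} w * norm w powr (- real DIM('a) - (2 * s - k)) \<partial>lborel)"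
  define I\<^sub>1 where
    "I\<^sub>1 = (\<integral>w. indicator {w::'a. X / 2 \<le> norm w} w * norm w powr (- real DIM('a) - (2 * s - 1)) \<partial>lborel)"
  have \<gamma>\<^sub>0: "0 < \<gamma>\<^sub>0" "\<gamma>\<^sub>0 \<le> 2 * s - k" "\<gamma>\<^sub>0 \<le> 2 * s - 1" using s k by (auto simp: \<gamma>\<^sub>0_def)
  have "(2 - 2 * s) * (X powr (k - 2) * I\<^sub>i\<^sub>n) \<le> 2 powr (DIM('a) + 1) * 4 ^ DIM('a)"
    unfolding I\<^sub>i\<^sub>n_def using integral_norm_powr_inside_half_le[OF X, of "2 - 2 * s" "k - 2"] s k
    by simp
  then have inner: "(1 - s) * (X powr (k - 2) * I\<^sub>i\<^sub>n) \<le> 2 powr DIM('a) * 4 ^ DIM('a)"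
    by (simp add: powr_add algebra_simps)
  have "X powr 0 * I\<^sub>k \<le> C * 2 powr (2 * s - k)"
    unfolding I\<^sub>k_def C_def using integral_norm_powr_outside_half_le[OF X \<gamma>\<^sub>0(1,2), of 0] s k
    by simp
  moreover have "X powr (k - 1) * I\<^sub>1 \<le> C * 2 powr (2 * s - 1)"
    unfolding I\<^sub>1_def C_def using integral_norm_powr_outside_half_le[OF X \<gamma>\<^sub>0(1,3), of "k - 1"] s k
    by simp
  moreover have "2 powr (2 * s - k) \<le> 4" "2 powr (2 * s - 1) \<le> 4"
    using s k powr_mono[of "2 * s - k" 2 2] powr_mono[of "2 * s - 1" 2 2] by auto
  moreover have "0 \<le> C" using \<gamma>\<^sub>0 by (simp add: C_def powr_less_one less_imp_le)
  ultimately have outer_k: "I\<^sub>k \<le> 4 * C" and outer_1: "X powr (k - 1) * I\<^sub>1 \<le> 4 * C"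
    using X by (auto intro: order_trans mult_left_mono simp: mult.commute)
  have "0 \<le> I\<^sub>k" "0 \<le> I\<^sub>1"
    unfolding I\<^sub>k_def I\<^sub>1_def by (auto intro!: integral_nonneg_AE)
  then have "(1 - s) * (5 powr k * I\<^sub>k + k * (X powr (k - 1) * I\<^sub>1))
      \<le> 5 powr k * I\<^sub>k + k * (X powr (k - 1) * I\<^sub>1)"
    using s k by (intro mult_left_le_one_le add_nonneg_nonneg mult_nonneg_nonneg) auto
  also have "\<dots> \<le> 5 powr k * (4 * C) + k * (4 * C)"
    using outer_k outer_1 k by (intro add_mono mult_left_mono) auto
  also have "\<dots> = (4 * 5 powr k + 4 * k) * C"
    by (simp add: algebra_simps)
  finally have outer:
    "(1 - s) * (5 powr k * I\<^sub>k + k * (X powr (k - 1) * I\<^sub>1)) \<le> (4 * 5 powr k + 4 * k) * C" .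
  have "(\<integral>w. norm (w::'a) powr (- real DIM('a) - 2 * s) * jbr_remainder_majorant k X (norm w) \<partial>lborel)
      = k / 2 * X powr (k - 2) * I\<^sub>i\<^sub>n + 5 powr k * I\<^sub>k + k * X powr (k - 1) * I\<^sub>1"
    unfolding I\<^sub>i\<^sub>n_def I\<^sub>k_def I\<^sub>1_def
    using integral_norm_powr_mult_jbr_remainder_majorant_eq(2)[of X "2 * s" k, where 'a='a] X s k
    by simp
  then have "(1 - s)
        * (\<integral>w. norm (w::'a) powr (- real DIM('a) - 2 * s) * jbr_remainder_majorant k X (norm w) \<partial>lborel)
      = k / 2 * ((1 - s) * (X powr (k - 2) * I\<^sub>i\<^sub>n))
        + (1 - s) * (5 powr k * I\<^sub>k + k * (X powr (k - 1) * I\<^sub>1))"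
    by (simp add: field_simps)
  also have "\<dots> \<le> k / 2 * (2 powr DIM('a) * 4 ^ DIM('a)) + (4 * 5 powr k + 4 * k) * C"
    using inner outer k by (intro add_mono mult_left_mono) auto
  finally show ?thesis
    by (simp only: C_def \<gamma>\<^sub>0_def)
qed

section \<open>Moments of the kernel\<close>

lemma LIMSEQ_sin_mult_divide:
  fixes t :: "nat \<Rightarrow> real"
  assumes t: "t \<longlonglongrightarrow> 0" "\<And>n. t n \<noteq> 0"
  shows "(\<lambda>n. sin (t n * a) / t n) \<longlonglongrightarrow> a"
proof -
  have "((\<lambda>h. sin (h * a)) has_field_derivative cos (0 * a) * a) (at 0)"
    by (auto intro!: derivative_eq_intros)
  then have "((\<lambda>h. sin (h * a) / h) \<longlongrightarrow> a) (at 0)"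
    unfolding has_field_derivative_iff by simp
  moreover have "filterlim t (at 0) sequentially"
    using t by (intro filterlim_atI) auto
  ultimately show ?thesis
    by (rule filterlim_compose)
qed

lemma Im_fourier:
  fixes J :: "'a::euclidean_space \<Rightarrow> real"
  assumes J: "integrable lborel J"
  shows "Im (fourier J \<xi>) = - (\<integral>z. J z * sin (z \<bullet> \<xi>) \<partial>lborel)"
proof -
  have [measurable]: "J \<in> borel_measurable borel"
    using J by auto
  have [measurable]: "(\<lambda>z::'a. cis (- (z \<bullet> \<xi>))) \<in> borel_measurable borel"
    by (intro borel_measurable_continuous_onI continuous_intros)
  have "integrable lborel (\<lambda>z. cis (- (z \<bullet> \<xi>)) * complex_of_real (J z))"
    by (rule Bochner_Integration.integrable_bound[OF J]) (auto simp: norm_mult)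
  then have "Im (fourier J \<xi>) = (\<integral>z. Im (cis (- (z \<bullet> \<xi>)) * complex_of_real (J z)) \<partial>lborel)"
    unfolding fourier_def by (rule integral_bounded_linear[OF bounded_linear_Im, symmetric])
  then show ?thesis
    by (simp add: mult.commute)
qed

lemma LIMSEQ_integral_sin_inner_divide:
  fixes J :: "'a::euclidean_space \<Rightarrow> real" and t :: "nat \<Rightarrow> real"
  assumes J: "integrable lborel J" and J1: "integrable lborel (\<lambda>z. J z * norm z)"
    and t: "t \<longlonglongrightarrow> 0" "\<And>n. 0 < t n"
  shows "(\<lambda>n. \<integral>z. J z * (sin (t n * (z \<bullet> u)) / t n) \<partial>lborel) \<longlonglongrightarrow> (\<integral>z. J z * (z \<bullet> u) \<partial>lborel)"
proof -
  have [measurable]: "J \<in> borel_measurable borel" using J by auto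
  show ?thesis
  proof (rule integral_dominated_convergence[where w="\<lambda>z. \<bar>J z * norm z\<bar> * norm u"])
    show "integrable lborel (\<lambda>z. \<bar>J z * norm z\<bar> * norm u)"
      using J1 by auto
    show "AE z in lborel. (\<lambda>n. J z * (sin (t n * (z \<bullet> u)) / t n)) \<longlonglongrightarrow> J z * (z \<bullet> u)"
      using t(1) less_imp_neq[OF t(2), symmetric]
      by (intro AE_I2 tendsto_mult_left LIMSEQ_sin_mult_divide)
    show "AE z in lborel. norm (J z * (sin (t n * (z \<bullet> u)) / t n)) \<le> \<bar>J z * norm z\<bar> * norm u" for n
    proof (intro AE_I2)
      fix z
      have "\<bar>sin (t n * (z \<bullet> u))\<bar> / t n \<le> \<bar>z \<bullet> u\<bar>"
        using t(2)[of n] abs_sin_x_le_abs_x[of "t n * (z \<bullet> u)"]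
        by (simp add: abs_mult divide_le_eq mult.commute)
      also have "\<dots> \<le> norm z * norm u" by (rule Cauchy_Schwarz_ineq2)
      finally have "\<bar>J z\<bar> * (\<bar>sin (t n * (z \<bullet> u))\<bar> / t n) \<le> \<bar>J z\<bar> * (norm z * norm u)"
        by (rule mult_left_mono) simp
      then show "norm (J z * (sin (t n * (z \<bullet> u)) / t n)) \<le> \<bar>J z * norm z\<bar> * norm u"
        using t(2)[of n] by (simp add: abs_mult mult.assoc)
    qed
  qed auto
qed

text \<open>By the previous lemma \<open>Im (fourier J (t *\<^sub>R u)) / t\<close> tends to \<open>- \<integral> J z * (z \<bullet> u)\<close> as
  \<open>t \<rightarrow> 0\<close>, while the hypothesis forces it to \<open>0\<close>.\<close>

lemma integral_inner_eq_0_if_Im_fourier_le: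
  fixes J :: "'a::euclidean_space \<Rightarrow> real" and u :: 'a
  assumes J: "integrable lborel J" and J1: "integrable lborel (\<lambda>z. J z * norm z)" and \<beta>: "1 < \<beta>"
    and Im_le: "\<And>\<xi>. norm \<xi> \<le> 1 \<Longrightarrow> \<bar>Im (fourier J \<xi>)\<bar> \<le> C * norm \<xi> powr \<beta>"
  shows "(\<integral>z. J z * (z \<bullet> u) \<partial>lborel) = 0"
proof (cases "u = 0")
  case False
  define \<nu> where "\<nu> = norm u"
  define t where "t n = inverse (\<nu> + 1) * inverse (real (Suc n))" for n
  define S where "S n = (\<integral>z. J z * (sin (t n * (z \<bullet> u)) / t n) \<partial>lborel)" for n
  have \<nu>: "0 < \<nu>" using False by (simp add: \<nu>_def)
  have t_pos: "0 < t n" for n using \<nu> by (simp add: t_def)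
  have t_\<nu>: "t n * \<nu> \<le> 1" for n
  proof -
    have "t n * \<nu> = \<nu> / (\<nu> + 1) * inverse (real (Suc n))" by (simp add: t_def field_simps)
    also have "\<dots> \<le> 1 * 1" using \<nu> by (intro mult_mono) (auto simp: field_simps)
    finally show ?thesis by simp
  qed
  have t_lim: "t \<longlonglongrightarrow> 0"
    unfolding t_def by (intro tendsto_mult_right_zero LIMSEQ_inverse_real_of_nat)
  have S_le: "norm (S n) \<le> \<bar>C\<bar> * \<nu> powr \<beta> * t n powr (\<beta> - 1)" for n
  proof -
    have "norm (S n) = \<bar>Im (fourier J (t n *\<^sub>R u))\<bar> / t n"
      using t_pos[of n] by (simp add: S_def Im_fourier[OF J])
    also have "\<dots> \<le> \<bar>C\<bar> * (t n * \<nu>) powr \<beta> / t n"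
      using Im_le[of "t n *\<^sub>R u"] t_pos[of n] t_\<nu>[of n] abs_ge_self[of C]
      by (intro divide_right_mono) (force simp: \<nu>_def intro: order_trans mult_right_mono)+
    also have "\<dots> = \<bar>C\<bar> * \<nu> powr \<beta> * t n powr (\<beta> - 1)"
      using t_pos[of n] \<nu> by (simp add: powr_mult powr_diff)
    finally show ?thesis .
  qed
  have "S \<longlonglongrightarrow> 0"
  proof (rule Lim_null_comparison)
    show "\<forall>\<^sub>F n in sequentially. norm (S n) \<le> \<bar>C\<bar> * \<nu> powr \<beta> * t n powr (\<beta> - 1)"
      using S_le by simp
    show "(\<lambda>n. \<bar>C\<bar> * \<nu> powr \<beta> * t n powr (\<beta> - 1)) \<longlonglongrightarrow> 0"
      using t_lim t_pos \<beta> by (intro tendsto_mult_right_zero tendsto_zero_powrI always_eventually)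
        (auto intro: less_imp_le)
  qed
  moreover have "S \<longlonglongrightarrow> (\<integral>z. J z * (z \<bullet> u) \<partial>lborel)"
    unfolding S_def using J J1 t_lim t_pos by (rule LIMSEQ_integral_sin_inner_divide)
  ultimately show ?thesis
    using LIMSEQ_unique by blast
qed simp

lemma integrable_mult_norm_if_tail_le:
  fixes J \<Psi> :: "'a::euclidean_space \<Rightarrow> real"
  assumes J0: "\<And>z. 0 \<le> J z" and J: "integrable lborel J"
    and \<Psi>: "integrable lborel (\<lambda>z. (1 + (norm z)\<^sup>2) * \<bar>\<Psi> z\<bar>)"
    and R: "0 < R" and c: "0 \<le> c" and \<gamma>: "1 < \<gamma>"
    and tail: "\<And>z. R \<le> norm z \<Longrightarrow> J z \<le> c * norm z powr (- real DIM('a) - \<gamma>) + \<Psi> z"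
  shows "integrable lborel (\<lambda>z. J z * norm z)"
proof (rule Bochner_Integration.integrable_bound)
  let ?far = "\<lambda>z::'a. indicator {z. R \<le> norm z} z * norm z powr (- real DIM('a) - (\<gamma> - 1))"
  define g where "g z = R * J z + c * ?far z + (1 + (norm z)\<^sup>2) * \<bar>\<Psi> z\<bar>" for z
  show "integrable lborel g"
    unfolding g_def using J \<Psi> integral_norm_powr_outside_ball(1)[OF R, of "\<gamma> - 1", where 'a='a] \<gamma>
    by simp
  have [measurable]: "J \<in> borel_measurable borel" using J by auto
  show "(\<lambda>z. J z * norm z) \<in> borel_measurable lborel" by measurable
  have "J z * norm z \<le> g z" for z
  proof (cases "R \<le> norm z")
    case False
    then have "J z * norm z \<le> R * J z"
      using J0[of z] mult_left_mono[of "norm z" R "J z"] by (simp add: mult.commute)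
    moreover have "0 \<le> c * ?far z" "0 \<le> (1 + (norm z)\<^sup>2) * \<bar>\<Psi> z\<bar>"
      using c by auto
    ultimately show ?thesis unfolding g_def by linarith
  next
    case True
    have "norm z powr (- real DIM('a) - \<gamma>) * norm z = norm z powr (- real DIM('a) - \<gamma>) * norm z powr 1"
      using True R by simp
    also have "\<dots> = ?far z"
      by (simp only: powr_add[symmetric]) (simp add: True algebra_simps)
    finally have far: "norm z powr (- real DIM('a) - \<gamma>) * norm z = ?far z" .
    have "2 * norm z \<le> (norm z)\<^sup>2 + 1"
      using zero_le_power2[of "norm z - 1"] by (simp add: power2_diff)
    then have "\<Psi> z * norm z \<le> (1 + (norm z)\<^sup>2) * \<bar>\<Psi> z\<bar>"
      using mult_mono[OF abs_ge_self[of "\<Psi> z"], of "norm z" "1 + (norm z)\<^sup>2"]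
      by (simp add: mult.commute)
    moreover have "J z * norm z \<le> (c * norm z powr (- real DIM('a) - \<gamma>) + \<Psi> z) * norm z"
      using tail[OF True] by (simp add: mult_right_mono)
    moreover have "\<dots> = c * ?far z + \<Psi> z * norm z"
      unfolding far[symmetric] by (simp add: algebra_simps)
    moreover have "0 \<le> R * J z"
      using R J0[of z] by simp
    ultimately show ?thesis
      unfolding g_def by linarith
  qed
  then show "AE z in lborel. norm (J z * norm z) \<le> norm (g z)"
    using J0 by (intro AE_I2) (simp add: abs_mult order_trans[OF _ abs_ge_self])
qed

section \<open>The nonlocal term\<close>

lemma integral_increment_eq_integral_jbr_remainder:
  fixes J :: "'a::euclidean_space \<Rightarrow> real"
  assumes J: "integrable lborel J" and J1: "integrable lborel (\<lambda>z. J z * norm z)"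
    and mean: "\<And>u. (\<integral>z. J z * (z \<bullet> u) \<partial>lborel) = 0"
    and F: "integrable lborel (\<lambda>z. J z * (jbr (x + \<epsilon> *\<^sub>R z) powr k - jbr x powr k))"
  shows "integrable lborel (\<lambda>z. J z * jbr_remainder k x (\<epsilon> *\<^sub>R z))"
    and "(\<integral>z. J z * (jbr (x + \<epsilon> *\<^sub>R z) powr k - jbr x powr k) \<partial>lborel)
      = (\<integral>z. J z * jbr_remainder k x (\<epsilon> *\<^sub>R z) \<partial>lborel)"
proof -
  define c where "c = k * jbr x powr (k - 2) * \<epsilon>"
  have [measurable]: "J \<in> borel_measurable borel" using J by auto
  have inner: "integrable lborel (\<lambda>z. J z * (z \<bullet> x))"
  proof (rule Bochner_Integration.integrable_bound)
    show "integrable lborel (\<lambda>z. norm x * \<bar>J z * norm z\<bar>)" using J1 by auto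
    have "\<bar>J z\<bar> * \<bar>z \<bullet> x\<bar> \<le> \<bar>J z\<bar> * (norm z * norm x)" for z
      by (intro mult_left_mono Cauchy_Schwarz_ineq2) simp
    then show "AE z in lborel. norm (J z * (z \<bullet> x)) \<le> norm (norm x * \<bar>J z * norm z\<bar>)"
      by (intro AE_I2) (simp add: abs_mult mult_ac)
  qed measurable
  have split: "J z * jbr_remainder k x (\<epsilon> *\<^sub>R z)
      = J z * (jbr (x + \<epsilon> *\<^sub>R z) powr k - jbr x powr k) - c * (J z * (z \<bullet> x))" for z
    by (simp add: jbr_remainder_def c_def algebra_simps inner_commute)
  show "integrable lborel (\<lambda>z. J z * jbr_remainder k x (\<epsilon> *\<^sub>R z))"
    unfolding split using F inner by auto
  show "(\<integral>z. J z * (jbr (x + \<epsilon> *\<^sub>R z) powr k - jbr x powr k) \<partial>lborel)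
      = (\<integral>z. J z * jbr_remainder k x (\<epsilon> *\<^sub>R z) \<partial>lborel)"
    unfolding split using F inner mean[of x] by simp
qed

lemma scaled_jbr_remainder_le_square:
  assumes k: "0 \<le> k" "k \<le> 2" and \<epsilon>: "0 < \<epsilon>" "\<epsilon> \<le> 1" and s: "s \<le> 1"
  shows "\<epsilon> powr (- 2 * s) * jbr_remainder k x (\<epsilon> *\<^sub>R z) \<le> k / 2 * (norm z)\<^sup>2"
proof -
  have "\<epsilon> powr (- 2 * s) * jbr_remainder k x (\<epsilon> *\<^sub>R z)
      \<le> \<epsilon> powr (- 2 * s) * (k / 2 * jbr x powr (k - 2) * (norm (\<epsilon> *\<^sub>R z))\<^sup>2)"
    using jbr_remainder_le_square[OF k, of x "\<epsilon> *\<^sub>R z"] by (intro mult_left_mono) simp_all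
  also have "\<dots> = k / 2 * jbr x powr (k - 2) * \<epsilon> powr (2 - 2 * s) * (norm z)\<^sup>2"
  proof -
    have "\<epsilon> powr (- 2 * s) * \<epsilon>\<^sup>2 = \<epsilon> powr (- 2 * s) * \<epsilon> powr 2"
      using \<epsilon> by (simp add: powr_numeral)
    also have "\<dots> = \<epsilon> powr (2 - 2 * s)"
      by (simp add: powr_add[symmetric])
    finally have eps: "\<epsilon> powr (- 2 * s) * \<epsilon>\<^sup>2 = \<epsilon> powr (2 - 2 * s)" .
    have "\<epsilon> powr (- 2 * s) * (k / 2 * jbr x powr (k - 2) * (norm (\<epsilon> *\<^sub>R z))\<^sup>2)
        = k / 2 * jbr x powr (k - 2) * (\<epsilon> powr (- 2 * s) * \<epsilon>\<^sup>2) * (norm z)\<^sup>2"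
      using \<epsilon> by (simp add: power_mult_distrib)
    then show ?thesis
      by (simp only: eps)
  qed
  also have "\<dots> \<le> k / 2 * (norm z)\<^sup>2"
  proof -
    have "jbr x powr (k - 2) * \<epsilon> powr (2 - 2 * s) \<le> 1"
      using k \<epsilon> s jbr_ge_1[of x] powr_mono[of "k - 2" 0 "jbr x"] powr_mono'[of 0 "2 - 2 * s" \<epsilon>]
      by (intro mult_le_one) auto
    then have "k / 2 * (norm z)\<^sup>2 * (jbr x powr (k - 2) * \<epsilon> powr (2 - 2 * s)) \<le> k / 2 * (norm z)\<^sup>2"
      using k by (intro mult_left_le) auto
    then show ?thesis by (simp add: mult_ac)
  qed
  finally show ?thesis .
qed

lemma mult_le_if_le_sum_and_le_majorants:
  fixes j q m a p \<psi> :: real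
  assumes "0 \<le> j" "j \<le> p + \<psi>" "0 \<le> p" and "q \<le> m" "0 \<le> m" and "q \<le> a" "0 \<le> a"
  shows "j * q \<le> p * m + \<bar>\<psi>\<bar> * a"
proof -
  have "j * q \<le> j * max q 0"
    using assms by (intro mult_left_mono) auto
  also have "\<dots> \<le> (p + \<psi>) * max q 0"
    using assms by (intro mult_right_mono) auto
  also have "\<dots> = p * max q 0 + \<psi> * max q 0"
    by (simp add: distrib_right)
  also have "\<dots> \<le> p * m + \<bar>\<psi>\<bar> * a"
    using assms by (intro add_mono mult_left_mono mult_mono) auto
  finally show ?thesis .
qed

lemma kernel_jbr_remainder_le:
  fixes J \<Psi> :: "'a::euclidean_space \<Rightarrow> real"
  assumes J0: "0 \<le> J z"
    and tail: "R \<le> norm z \<Longrightarrow> J z \<le> C * (1 - s) * norm z powr (- real DIM('a) - 2 * s) + \<Psi> z"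
    and C: "0 \<le> C" and s: "s < 1" and k: "0 \<le> k" "k \<le> 2" and \<epsilon>: "0 < \<epsilon>" "\<epsilon> \<le> 1"
  shows "\<epsilon> powr (- 2 * s) * (J z * jbr_remainder k x (\<epsilon> *\<^sub>R z))
    \<le> k / 2 * R\<^sup>2 * (J z * indicator {z. norm z < R} z) + k / 2 * ((1 + (norm z)\<^sup>2) * \<bar>\<Psi> z\<bar>)
      + C * (1 - s) * (\<epsilon> powr (- 2 * s)
          * (norm z powr (- real DIM('a) - 2 * s) * jbr_remainder_majorant k (jbr x) (norm (\<epsilon> *\<^sub>R z))))"
    (is "_ \<le> ?near + ?\<Psi> + ?stable")
proof -
  define q where "q = \<epsilon> powr (- 2 * s) * jbr_remainder k x (\<epsilon> *\<^sub>R z)"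
  define m where "m = \<epsilon> powr (- 2 * s) * jbr_remainder_majorant k (jbr x) (norm (\<epsilon> *\<^sub>R z))"
  define p where "p = C * (1 - s) * norm z powr (- real DIM('a) - 2 * s)"
  have q_sq: "q \<le> k / 2 * (norm z)\<^sup>2"
    unfolding q_def by (rule scaled_jbr_remainder_le_square[OF k \<epsilon> less_imp_le[OF s]])
  have q_m: "q \<le> m"
    unfolding q_def m_def using jbr_remainder_le_majorant[OF k, of x "\<epsilon> *\<^sub>R z"]
    by (intro mult_left_mono) simp_all
  have "0 \<le> m" "0 \<le> p"
    unfolding m_def p_def using k C s by (simp_all add: jbr_remainder_majorant_nonneg)
  moreover have stable: "?stable = p * m"
    by (simp add: m_def p_def mult_ac)
  ultimately have nonneg: "0 \<le> ?near" "0 \<le> ?\<Psi>" "0 \<le> ?stable"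
    using J0 k by auto
  have "J z * q \<le> ?near + ?\<Psi> + ?stable"
  proof (cases "R \<le> norm z")
    case False
    then have "k / 2 * (norm z)\<^sup>2 \<le> k / 2 * R\<^sup>2"
      using k by (intro mult_left_mono power_mono) auto
    then have "J z * q \<le> J z * (k / 2 * R\<^sup>2)"
      using q_sq J0 by (intro mult_left_mono) auto
    with False nonneg show ?thesis by (simp add: mult_ac)
  next
    case True
    have "J z * q \<le> p * m + \<bar>\<Psi> z\<bar> * (k / 2 * (norm z)\<^sup>2)"
      using J0 tail[OF True] q_m q_sq \<open>0 \<le> m\<close> \<open>0 \<le> p\<close> k
      by (intro mult_le_if_le_sum_and_le_majorants) (simp_all add: p_def)
    also have "\<dots> \<le> ?stable + ?\<Psi>"
      unfolding stable using k mult_left_mono[of "(norm z)\<^sup>2" "1 + (norm z)\<^sup>2" "k / 2 * \<bar>\<Psi> z\<bar>"]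
      by (simp add: mult_ac)
    finally show ?thesis using nonneg by linarith
  qed
  then show ?thesis by (simp add: q_def mult.left_commute)
qed

lemma integral_kernel_majorant_le:
  fixes J \<Psi> :: "'a::euclidean_space \<Rightarrow> real" and x :: 'a and R :: real
  assumes J0: "\<And>z. 0 \<le> J z" and J: "integrable lborel J" and J_le: "integral\<^sup>L lborel J \<le> 1"
    and \<Psi>: "integrable lborel (\<lambda>z. (1 + (norm z)\<^sup>2) * \<bar>\<Psi> z\<bar>)"
    and C: "0 \<le> C" and s: "1/2 < s" "s < 1" and k: "0 < k" "k < 2 * s" and \<epsilon>: "0 < \<epsilon>"
  defines "T \<equiv> \<lambda>z. k / 2 * R\<^sup>2 * (J z * indicator {z. norm z < R} z) + k / 2 * ((1 + (norm z)\<^sup>2) * \<bar>\<Psi> z\<bar>)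
    + C * (1 - s) * (\<epsilon> powr (- 2 * s)
        * (norm z powr (- real DIM('a) - 2 * s) * jbr_remainder_majorant k (jbr x) (norm (\<epsilon> *\<^sub>R z))))"
  shows "integrable lborel T" and "0 \<le> integral\<^sup>L lborel T"
    and "integral\<^sup>L lborel T \<le> k / 2 * R\<^sup>2 + k / 2 * (\<integral>z. (1 + (norm z)\<^sup>2) * \<bar>\<Psi> z\<bar> \<partial>lborel)
      + C * (1 - s) * (\<integral>w. norm (w::'a) powr (- real DIM('a) - 2 * s)
          * jbr_remainder_majorant k (jbr x) (norm w) \<partial>lborel)"
proof -
  let ?P = "\<lambda>z::'a. norm z powr (- real DIM('a) - 2 * s)"
  let ?M = "\<lambda>w::'a. jbr_remainder_majorant k (jbr x) (norm w)"
  have stable_integrable: "integrable lborel (\<lambda>w. ?P w * ?M w)"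
    using integral_norm_powr_mult_jbr_remainder_majorant_eq(1)[of "jbr x" "2 * s" k] jbr_ge_1[of x] s k
    by simp
  have stable_scaled: "(\<integral>z. \<epsilon> powr (- 2 * s) * (?P z * ?M (\<epsilon> *\<^sub>R z)) \<partial>lborel) = (\<integral>w. ?P w * ?M w \<partial>lborel)"
    using integral_homogeneous_weight_scaleR(2)[OF \<epsilon>, of "2 * s" ?M] by simp
  show "integrable lborel T"
    using integral_homogeneous_weight_scaleR(1)[OF \<epsilon>, of "2 * s" ?M] stable_integrable J \<Psi>
    unfolding T_def by (simp add: integrable_real_mult_indicator)
  show "0 \<le> integral\<^sup>L lborel T"
    using J0 k C s jbr_remainder_majorant_nonneg[of k _ "jbr x"]
    by (intro integral_nonneg_AE AE_I2) (simp add: T_def)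
  have "(\<integral>z. J z * indicator {z. norm z < R} z \<partial>lborel) \<le> integral\<^sup>L lborel J"
    using J J0 by (intro integral_mono integrable_real_mult_indicator) (auto simp: indicator_def)
  then have "k / 2 * R\<^sup>2 * (\<integral>z. J z * indicator {z. norm z < R} z \<partial>lborel) \<le> k / 2 * R\<^sup>2"
    using J_le k by (intro mult_left_le) auto
  moreover have "integral\<^sup>L lborel T = k / 2 * R\<^sup>2 * (\<integral>z. J z * indicator {z. norm z < R} z \<partial>lborel)
      + k / 2 * (\<integral>z. (1 + (norm z)\<^sup>2) * \<bar>\<Psi> z\<bar> \<partial>lborel) + C * (1 - s) * (\<integral>w. ?P w * ?M w \<partial>lborel)"
    using integral_homogeneous_weight_scaleR(1)[OF \<epsilon>, of "2 * s" ?M] stable_integrable J \<Psi>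
    unfolding T_def stable_scaled[symmetric] by (simp add: integrable_real_mult_indicator)
  ultimately show "integral\<^sup>L lborel T \<le> k / 2 * R\<^sup>2 + k / 2 * (\<integral>z. (1 + (norm z)\<^sup>2) * \<bar>\<Psi> z\<bar> \<partial>lborel)
      + C * (1 - s) * (\<integral>w. ?P w * ?M w \<partial>lborel)"
    by linarith
qed

lemma nonlocal_jbr_powr_le:
  fixes J \<Psi> :: "'a::euclidean_space \<Rightarrow> real"
  assumes J0: "\<And>z. 0 \<le> J z" and J: "integrable lborel J" and J_le: "integral\<^sup>L lborel J \<le> 1"
    and J1: "integrable lborel (\<lambda>z. J z * norm z)"
    and mean: "\<And>u. (\<integral>z. J z * (z \<bullet> u) \<partial>lborel) = 0"
    and \<Psi>: "integrable lborel (\<lambda>z. (1 + (norm z)\<^sup>2) * \<bar>\<Psi> z\<bar>)"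
    and tail: "\<And>z. R \<le> norm z \<Longrightarrow> J z \<le> C * (1 - s) * norm z powr (- real DIM('a) - 2 * s) + \<Psi> z"
    and C: "0 \<le> C" and s: "1/2 < s" "s < 1" and k: "0 < k" "k < 2 * s" and \<epsilon>: "0 < \<epsilon>" "\<epsilon> \<le> 1"
  shows "\<epsilon> powr (- 2 * s) * (\<integral>z. J z * (jbr (x + \<epsilon> *\<^sub>R z) powr k - jbr x powr k) \<partial>lborel)
    \<le> k / 2 * R\<^sup>2 + k / 2 * (\<integral>z. (1 + (norm z)\<^sup>2) * \<bar>\<Psi> z\<bar> \<partial>lborel)
      + C * (1 - s) * (\<integral>w. norm (w::'a) powr (- real DIM('a) - 2 * s)
          * jbr_remainder_majorant k (jbr x) (norm w) \<partial>lborel)"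
proof (cases "integrable lborel (\<lambda>z. J z * (jbr (x + \<epsilon> *\<^sub>R z) powr k - jbr x powr k))")
  case True
  note remainder = integral_increment_eq_integral_jbr_remainder[OF J J1 mean True]
  note T = integral_kernel_majorant_le[OF J0 J J_le \<Psi> C s k \<epsilon>(1), where R=R and x=x]
  let ?T = "\<lambda>z. k / 2 * R\<^sup>2 * (J z * indicator {z. norm z < R} z) + k / 2 * ((1 + (norm z)\<^sup>2) * \<bar>\<Psi> z\<bar>)
    + C * (1 - s) * (\<epsilon> powr (- 2 * s)
        * (norm z powr (- real DIM('a) - 2 * s) * jbr_remainder_majorant k (jbr x) (norm (\<epsilon> *\<^sub>R z))))"
  have "\<epsilon> powr (- 2 * s) * (\<integral>z. J z * (jbr (x + \<epsilon> *\<^sub>R z) powr k - jbr x powr k) \<partial>lborel)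
      = (\<integral>z. \<epsilon> powr (- 2 * s) * (J z * jbr_remainder k x (\<epsilon> *\<^sub>R z)) \<partial>lborel)"
    unfolding remainder(2) by simp
  also have "\<dots> \<le> integral\<^sup>L lborel ?T"
  proof (rule integral_mono)
    show "integrable lborel (\<lambda>z. \<epsilon> powr (- 2 * s) * (J z * jbr_remainder k x (\<epsilon> *\<^sub>R z)))"
      using remainder(1) by simp
    show "\<epsilon> powr (- 2 * s) * (J z * jbr_remainder k x (\<epsilon> *\<^sub>R z)) \<le> ?T z" for z
      using kernel_jbr_remainder_le[where J=J and z=z and R=R and \<Psi>=\<Psi> and C=C and s=s, OF J0 tail C s(2)]
        k s \<epsilon> by simp
  qed (rule T(1))
  finally show ?thesis
    using T(3) by linarith
next
  case False
  \<comment> \<open>The Bochner integral of a non-integrable function is \<open>0\<close>.\<close>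
  then show ?thesis
    using integral_kernel_majorant_le(2,3)[OF J0 J J_le \<Psi> C s k \<epsilon>(1), where R=R and x=x]
    by (simp add: not_integrable_integral_eq)
qed

lemma H1_integrable_first_moment:
  assumes "H1 J" "1/2 < s" "s < 1"
  shows "integrable lborel (\<lambda>z. J s z * norm z)"
proof -
  obtain C R \<Psi> where "0 < C" "0 < R" "L1_2 \<Psi>"
    and tail: "\<forall>s x. 1/2 < s \<and> s < 1 \<and> R \<le> norm x \<longrightarrow>
      J s x \<le> C * (1 - s) * norm x powr (- real DIM('a) - 2 * s) + \<Psi> x"
    using assms(1) unfolding H1_def by blast
  moreover have "prob_density (J s)"
    using assms unfolding H1_def by blast
  ultimately show ?thesis
    using assms
    by (intro integrable_mult_norm_if_tail_le[where \<Psi>=\<Psi> and R=R and c="C * (1 - s)" and \<gamma>="2 * s"])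
      (auto simp: prob_density_def L1_2_def)
qed

lemma H1_integral_inner_eq_0:
  assumes "H1 J" "1/2 < s" "s < 1"
  shows "(\<integral>z. J s z * (z \<bullet> u) \<partial>lborel) = 0"
proof -
  obtain \<delta> C\<^sub>0 where \<delta>: "0 < \<delta>" and expansion: "\<forall>s \<xi>. 1/2 < s \<and> s < 1 \<and> norm \<xi> \<le> 1 \<longrightarrow>
      cmod (fourier (J s) \<xi> - (1 - complex_of_real (norm \<xi> powr (2 * s)))) \<le> C\<^sub>0 * norm \<xi> powr (2 * s + \<delta>)"
    using assms(1) unfolding H1_def by blast
  have Im_le: "\<bar>Im (fourier (J s) \<xi>)\<bar> \<le> C\<^sub>0 * norm \<xi> powr (2 * s + \<delta>)" if "norm \<xi> \<le> 1" for \<xi>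
  proof -
    let ?e = "fourier (J s) \<xi> - (1 - complex_of_real (norm \<xi> powr (2 * s)))"
    have "\<bar>Im (fourier (J s) \<xi>)\<bar> = \<bar>Im ?e\<bar>" by simp
    also have "\<dots> \<le> cmod ?e" by (rule abs_Im_le_cmod)
    also have "\<dots> \<le> C\<^sub>0 * norm \<xi> powr (2 * s + \<delta>)" using expansion that assms by blast
    finally show ?thesis .
  qed
  have "integrable lborel (J s)"
    using assms unfolding H1_def prob_density_def by blast
  moreover have "1 < 2 * s + \<delta>"
    using assms \<delta> by simp
  ultimately show ?thesis
    using integral_inner_eq_0_if_Im_fourier_le[OF _ H1_integrable_first_moment[OF assms] _ Im_le]
    by blast
qed

lemma H1_nonlocal_jbr_powr_bounded:
  fixes J :: "real \<Rightarrow> 'a::euclidean_space \<Rightarrow> real"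
  assumes "H1 J" "1/2 < s\<^sub>1" "s\<^sub>1 < 1" "0 < k" "k < 2 * s\<^sub>1"
  obtains K where "0 \<le> K"
    and "\<And>s \<epsilon> x. s\<^sub>1 \<le> s \<Longrightarrow> s < 1 \<Longrightarrow> 0 < \<epsilon> \<Longrightarrow> \<epsilon> \<le> 1 \<Longrightarrow>
      \<epsilon> powr (- 2 * s) * (\<integral>z. J s z * (jbr (x + \<epsilon> *\<^sub>R z) powr k - jbr x powr k) \<partial>lborel) \<le> K"
proof -
  obtain C R \<Psi> where C: "0 < C" and R: "0 < R" and \<Psi>: "L1_2 \<Psi>"
    and tail: "\<forall>s x. 1/2 < s \<and> s < 1 \<and> R \<le> norm x \<longrightarrow>
      J s x \<le> C * (1 - s) * norm x powr (- real DIM('a) - 2 * s) + \<Psi> x"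
    using assms(1) unfolding H1_def by blast
  define K\<^sub>s\<^sub>t where "K\<^sub>s\<^sub>t = k / 2 * (2 powr DIM('a) * 4 ^ DIM('a))
    + (4 * 5 powr k + 4 * k)
      * (2 powr (DIM('a) + 2) * 4 ^ DIM('a) / (1 - 2 powr (- min (2 * s\<^sub>1 - k) (2 * s\<^sub>1 - 1))))"
  define K where "K = k / 2 * R\<^sup>2 + k / 2 * (\<integral>z. (1 + (norm z)\<^sup>2) * \<bar>\<Psi> z\<bar> \<partial>lborel) + C * K\<^sub>s\<^sub>t"
  have "2 powr (- min (2 * s\<^sub>1 - k) (2 * s\<^sub>1 - 1)) < 1"
    using assms by (simp add: powr_less_one)
  then have "0 \<le> K\<^sub>s\<^sub>t"
    using assms unfolding K\<^sub>s\<^sub>t_def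
    by (intro add_nonneg_nonneg mult_nonneg_nonneg divide_nonneg_pos) auto
  then have "0 \<le> K"
    using assms C unfolding K_def
    by (intro add_nonneg_nonneg mult_nonneg_nonneg integral_nonneg_AE) auto
  moreover have "\<epsilon> powr (- 2 * s) * (\<integral>z. J s z * (jbr (x + \<epsilon> *\<^sub>R z) powr k - jbr x powr k) \<partial>lborel) \<le> K"
    if s: "s\<^sub>1 \<le> s" "s < 1" and \<epsilon>: "0 < \<epsilon>" "\<epsilon> \<le> 1" for s \<epsilon> x
  proof -
    have "1/2 < s" using s assms by simp
    then have J: "prob_density (J s)" using assms(1) s unfolding H1_def by blast
    have "\<epsilon> powr (- 2 * s) * (\<integral>z. J s z * (jbr (x + \<epsilon> *\<^sub>R z) powr k - jbr x powr k) \<partial>lborel)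
      \<le> k / 2 * R\<^sup>2 + k / 2 * (\<integral>z. (1 + (norm z)\<^sup>2) * \<bar>\<Psi> z\<bar> \<partial>lborel)
        + C * ((1 - s) * (\<integral>w. norm (w::'a) powr (- real DIM('a) - 2 * s)
          * jbr_remainder_majorant k (jbr x) (norm w) \<partial>lborel))"
      using nonlocal_jbr_powr_le[where J="J s" and \<Psi>=\<Psi> and R=R and C=C and s=s and x=x]
        J H1_integrable_first_moment[OF assms(1) \<open>1/2 < s\<close> s(2)]
        H1_integral_inner_eq_0[OF assms(1) \<open>1/2 < s\<close> s(2)]
        \<Psi> tail C s \<open>1/2 < s\<close> \<epsilon> assms
      by (simp add: prob_density_def L1_2_def mult.assoc)
    also have "\<dots> \<le> K"
      using integral_norm_powr_mult_jbr_remainder_majorant_le[of s\<^sub>1 s k "jbr x", where 'a='a]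
        jbr_ge_1[of x] s assms C unfolding K_def K\<^sub>s\<^sub>t_def by (simp add: mult_left_mono)
    finally show ?thesis .
  qed
  ultimately show ?thesis using that by blast
qed

lemma integral_Jeps_eq:
  assumes "0 < \<epsilon>"
  shows "(\<integral>y. Jeps J s \<epsilon> y * f y \<partial>lborel) = (\<integral>z. J s z * f (\<epsilon> *\<^sub>R z) \<partial>lborel)"
proof -
  have "(\<integral>y. Jeps J s \<epsilon> y * f y \<partial>lborel)
      = \<epsilon> ^ DIM('a) * (\<integral>z. \<epsilon> powr (- real DIM('a)) * (J s z * f (\<epsilon> *\<^sub>R z)) \<partial>lborel)"
    using assms by (subst lborel_integral_scaleR[of \<epsilon>]) (auto simp: Jeps_def mult.assoc)
  also have "\<dots> = (\<epsilon> ^ DIM('a) * \<epsilon> powr (- real DIM('a))) * (\<integral>z. J s z * f (\<epsilon> *\<^sub>R z) \<partial>lborel)"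
    by simp
  also have "\<epsilon> ^ DIM('a) * \<epsilon> powr (- real DIM('a)) = 1"
    using assms by (simp add: powr_minus powr_realpow)
  finally show ?thesis by simp
qed

lemma Lstar_jbr_powr_eq:
  assumes "0 < \<epsilon>"
  shows "Lstar J s \<epsilon> (\<lambda>z. jbr z powr k) x
    = \<epsilon> powr (- 2 * s) * (\<integral>z. J s z * (jbr (x + \<epsilon> *\<^sub>R z) powr k - jbr x powr k) \<partial>lborel)
      - (k * jbr x powr k - k * jbr x powr (k - 2))"
  unfolding Lstar_def integral_Jeps_eq[OF assms] frechet_derivative_jbr_powr_self ..

theorem theorem3p2:
  fixes J :: "real \<Rightarrow> 'a::euclidean_space \<Rightarrow> real"
    and k s1 :: real
  assumes "H1 J"
    and "1/2 < s1" and "s1 < 1"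
    and "0 < k" and "k < 2 * s1"
  shows "\<exists>CL lamL. 0 < CL \<and> 0 < lamL \<and>
           (\<forall>s \<epsilon> x. s1 \<le> s \<and> s < 1 \<and> 0 < \<epsilon> \<and> \<epsilon> \<le> 1 \<longrightarrow>
              Lstar J s \<epsilon> (\<lambda>z. jbr z powr k) x \<le> CL - lamL * jbr x powr k)"
proof -
  obtain K where "0 \<le> K" and nonlocal: "\<And>s \<epsilon> x. s1 \<le> s \<Longrightarrow> s < 1 \<Longrightarrow> 0 < \<epsilon> \<Longrightarrow> \<epsilon> \<le> 1 \<Longrightarrow>
      \<epsilon> powr (- 2 * s) * (\<integral>z. J s z * (jbr (x + \<epsilon> *\<^sub>R z) powr k - jbr x powr k) \<partial>lborel) \<le> K"
    using H1_nonlocal_jbr_powr_bounded[OF assms] by blast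
  have "Lstar J s \<epsilon> (\<lambda>z. jbr z powr k) x \<le> (K + k) - k * jbr x powr k"
    if "s1 \<le> s" "s < 1" "0 < \<epsilon>" "\<epsilon> \<le> 1" for s \<epsilon> x
  proof -
    have "k * jbr x powr (k - 2) \<le> k"
      using assms jbr_ge_1[of x] powr_mono[of "k - 2" 0 "jbr x"] by (intro mult_left_le) auto
    with nonlocal[where x=x, OF that] show ?thesis
      unfolding Lstar_jbr_powr_eq[OF that(3)] by linarith
  qed
  with \<open>0 \<le> K\<close> assms show ?thesis
    by (intro exI[of _ "K + k"] exI[of _ k]) auto
qed

end
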